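(* Let $T=S+D$ as in the context. If $T$ is invertible in $\mathcal{L}(X)$, then at least one of the following two inequalities holds: \[ R_{S+D}^{+}:=\lim_{k\to\infty}\left[\sup_{i\in\mathbb{Z}}\left|\frac{\prod_{m=0}^{k-1}w_{i+m}}{\prod_{m=0}^{k}d_{i+m}}\right|\right]^{1/k}\le 1 \qquad\text{or}\qquad R_{S+D}^{-}:=\lim_{k\to\infty}\left[\sup_{i\in\mathbb{Z}}\left|\frac{\prod_{m=1}^{k-1}d_{i-m}}{\prod_{m=1}^{k}w_{i-m}}\right|\right]^{1/k}\le 1 . \]
   Context: $X$ is a separable complex Hilbert space with orthonormal basis $\{e_i\}_{i\in\mathbb{Z}}$. $S$ is the weighted shift $Se_i=w_ie_{i+1}$ ($i\in\mathbb{Z}$) with a bounded weight sequence $\{w_i\}_{i\in\mathbb{Z}}\subset\mathbb{C}$, and $D$ is the bounded diagonal operator $De_i=d_ie_i$ with bounded $\{d_i\}_{i\in\mathbb{Z}}\subset\mathbb{C}$; $T=S+D$. Empty products equal $1$ (e.g. $\prod_{m=1}^{0}d_{i-m}=1$). The limits defining $R^{\pm}_{S+D}$ are taken in $[0,+\infty]$ (assumed to exist), and a supremum is $+\infty$ if some denominator vanishes or the quotients are unbounded. *)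

theory Defs
  imports "HOL-Analysis.Analysis"
begin

text \<open>The Hilbert space X with orthonormal basis (e_i)_{i in Z} is modelled
 (up to unitary equivalence) as l^2(Z), i.e. square-summable x :: int => complex,
 with e_i the i-th unit vector.\<close>

definition l2 :: "(int \<Rightarrow> complex) \<Rightarrow> bool" where
  "l2 x \<longleftrightarrow> (\<lambda>i. (cmod (x i))\<^sup>2) summable_on UNIV"

definition l2norm :: "(int \<Rightarrow> complex) \<Rightarrow> real" where
  "l2norm x = sqrt (infsum (\<lambda>i. (cmod (x i))\<^sup>2) UNIV)"

text \<open>T = S + D with S e_i = w_i e_{i+1}, D e_i = d_i e_i, i.e.
 (T x)_i = w_{i-1} x_{i-1} + d_i x_i.\<close>
definition shift_diag :: "(int \<Rightarrow> complex) \<Rightarrow> (int \<Rightarrow> complex) \<Rightarrow> (int \<Rightarrow> complex) \<Rightarrow> (int \<Rightarrow> complex)" where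
  "shift_diag w d x = (\<lambda>i. w (i - 1) * x (i - 1) + d i * x i)"

definition invertible_l2 :: "((int \<Rightarrow> complex) \<Rightarrow> (int \<Rightarrow> complex)) \<Rightarrow> bool" where
  "invertible_l2 T \<longleftrightarrow> (\<exists>U. (\<forall>x. l2 x \<longrightarrow> l2 (U x) \<and> U (T x) = x \<and> T (U x) = x)
       \<and> (\<exists>C. \<forall>x. l2 x \<longrightarrow> l2norm (U x) \<le> C * l2norm x))"

definition equot :: "complex \<Rightarrow> complex \<Rightarrow> ereal" where
  "equot num den = (if den = 0 then \<infinity> else ereal (cmod num / cmod den))"

definition eroot :: "nat \<Rightarrow> ereal \<Rightarrow> ereal" where
  "eroot k x = (if x = \<infinity> then \<infinity> else ereal (root k (real_of_ereal x)))"

definition Rplus_seq :: "(int \<Rightarrow> complex) \<Rightarrow> (int \<Rightarrow> complex) \<Rightarrow> nat \<Rightarrow> ereal" where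
  "Rplus_seq w d k = eroot k (SUP i. equot (\<Prod>m<k. w (i + int m)) (\<Prod>m\<le>k. d (i + int m)))"

definition Rminus_seq :: "(int \<Rightarrow> complex) \<Rightarrow> (int \<Rightarrow> complex) \<Rightarrow> nat \<Rightarrow> ereal" where
  "Rminus_seq w d k = eroot k (SUP i. equot (\<Prod>m\<in>{1..<k}. d (i - int m)) (\<Prod>m\<in>{1..k}. w (i - int m)))"

end

theory Submission
  imports Defs
begin

text \<open>Let g_j = T^-1 e_j be the columns of the inverse. Restricting g_j to [j,oo) gives a
  vector that T maps to a multiple of e_j, so by injectivity every column is supported either
  on [j,oo) with d_j g_j(j) = 1, or on (-oo,j). Applying T^-1 to T e_j = w_j e_(j+1) + d_j e_j
  gives e_j = w_j g_(j+1) + d_j g_j, which forces all columns to be of the same kind. On its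
  support the equation T g_j = e_j is a two-term recursion whose solution is the quotient of
  products defining R+ (forward case) resp. R- (backward case). The entries of g_j are bounded
  by the norm of T^-1, so the k-th term of that sequence is at most max(norm(T^-1),1)^(1/k),
  which tends to 1.\<close>

lemma l2_mono: "l2 x \<Longrightarrow> (\<And>i. cmod (y i) \<le> cmod (x i)) \<Longrightarrow> l2 y"
  unfolding l2_def
  by (rule summable_on_comparison_test[of "\<lambda>i. (cmod (x i))\<^sup>2"]) (auto intro: power_mono)

lemma l2_restrict: "l2 x \<Longrightarrow> l2 (\<lambda>i. if P i then x i else 0)"
  by (erule l2_mono) auto

lemma l2_cmult: "l2 x \<Longrightarrow> l2 (\<lambda>i. c * x i)"
  unfolding l2_def by (simp add: norm_mult power_mult_distrib summable_on_cmult_right)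

lemma cmod_add_square_le: "(cmod (a + b))\<^sup>2 \<le> 2 * (cmod a)\<^sup>2 + 2 * (cmod b)\<^sup>2"
proof -
  have "(cmod (a + b))\<^sup>2 \<le> (cmod a + cmod b)\<^sup>2"
    by (simp add: norm_triangle_ineq power_mono)
  also have "\<dots> \<le> 2 * (cmod a)\<^sup>2 + 2 * (cmod b)\<^sup>2"
    using zero_le_square[of "cmod a - cmod b"] by (simp add: power2_eq_square algebra_simps)
  finally show ?thesis .
qed

lemma l2_add: "l2 x \<Longrightarrow> l2 y \<Longrightarrow> l2 (\<lambda>i. x i + y i)"
  unfolding l2_def
  by (rule summable_on_comparison_test[of "\<lambda>i. 2 * (cmod (x i))\<^sup>2 + 2 * (cmod (y i))\<^sup>2"])
     (auto intro: summable_on_add summable_on_cmult_right cmod_add_square_le)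

lemma cmod_le_l2norm: "l2 x \<Longrightarrow> cmod (x i) \<le> l2norm x"
proof -
  assume "l2 x"
  have "infsum (\<lambda>i. (cmod (x i))\<^sup>2) {i} \<le> infsum (\<lambda>i. (cmod (x i))\<^sup>2) UNIV"
    using \<open>l2 x\<close> by (intro infsum_mono_neutral) (auto simp: l2_def)
  then have "sqrt ((cmod (x i))\<^sup>2) \<le> l2norm x"
    unfolding l2norm_def by (simp del: real_sqrt_abs)
  then show ?thesis by simp
qed

definition unit_vec :: "int \<Rightarrow> int \<Rightarrow> complex" where
  "unit_vec j = (\<lambda>i. if i = j then 1 else 0)"

lemma l2_unit_vec: "l2 (unit_vec j)"
  unfolding l2_def unit_vec_def
  by (subst summable_on_cong_neutral[where T="{j}"]) auto

lemma l2norm_unit_vec: "l2norm (unit_vec j) = 1"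
proof -
  have "infsum (\<lambda>i. (cmod (unit_vec j i))\<^sup>2) UNIV = infsum (\<lambda>i. (cmod (unit_vec j i))\<^sup>2) {j}"
    by (rule infsum_cong_neutral) (auto simp: unit_vec_def)
  then show ?thesis by (simp add: l2norm_def unit_vec_def)
qed

lemma shift_diag_apply: "shift_diag w d x i = w (i - 1) * x (i - 1) + d i * x i"
  by (simp add: shift_diag_def)

locale shift_diag_inverse =
  fixes w d :: "int \<Rightarrow> complex" and U :: "(int \<Rightarrow> complex) \<Rightarrow> int \<Rightarrow> complex" and C :: real
  assumes inverse: "l2 x \<Longrightarrow> l2 (U x) \<and> U (shift_diag w d x) = x \<and> shift_diag w d (U x) = x"
    and bounded: "l2 x \<Longrightarrow> l2norm (U x) \<le> C * l2norm x"
begin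

lemma shift_diag_inj: "l2 x \<Longrightarrow> l2 y \<Longrightarrow> shift_diag w d x = shift_diag w d y \<Longrightarrow> x = y"
  using inverse by metis

definition column :: "int \<Rightarrow> int \<Rightarrow> complex" where
  "column j = U (unit_vec j)"

lemma l2_column: "l2 (column j)"
  using inverse l2_unit_vec by (simp add: column_def)

lemma shift_diag_column: "shift_diag w d (column j) = unit_vec j"
  using inverse l2_unit_vec by (simp add: column_def)

lemma column_equation:
  "w (i - 1) * column j (i - 1) + d i * column j i = (if i = j then 1 else 0)"
  using fun_cong[OF shift_diag_column, of j i] by (simp add: shift_diag_apply unit_vec_def)

lemma cmod_column_le: "cmod (column j i) \<le> C"
proof -
  have "cmod (column j i) \<le> l2norm (column j)" by (rule cmod_le_l2norm[OF l2_column])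
  also have "\<dots> \<le> C" using bounded[OF l2_unit_vec] by (simp add: column_def l2norm_unit_vec)
  finally show ?thesis .
qed

lemma unit_vec_eq_columns: "unit_vec j i = w j * column (j + 1) i + d j * column j i"
proof -
  have "unit_vec j = (\<lambda>i. w j * column (j + 1) i + d j * column j i)"
  proof (rule shift_diag_inj)
    show "l2 (\<lambda>i. w j * column (j + 1) i + d j * column j i)"
      by (intro l2_add l2_cmult l2_column)
    show "shift_diag w d (unit_vec j) = shift_diag w d (\<lambda>i. w j * column (j + 1) i + d j * column j i)"
    proof
      fix i
      have "shift_diag w d (\<lambda>i. w j * column (j + 1) i + d j * column j i) i
          = w j * (w (i - 1) * column (j + 1) (i - 1) + d i * column (j + 1) i)
            + d j * (w (i - 1) * column j (i - 1) + d i * column j i)"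
        by (simp add: shift_diag_apply algebra_simps)
      then show "shift_diag w d (unit_vec j) i
          = shift_diag w d (\<lambda>i. w j * column (j + 1) i + d j * column j i) i"
        using column_equation[of i "j + 1"] column_equation[of i j]
        by (simp add: shift_diag_apply unit_vec_def)
    qed
  qed (rule l2_unit_vec)
  then show ?thesis by metis
qed

lemma column_restrict_right:
  "(\<lambda>i. if j \<le> i then column j i else 0) = (\<lambda>i. (d j * column j j) * column j i)"
proof (rule shift_diag_inj)
  show "l2 (\<lambda>i. if j \<le> i then column j i else 0)" by (rule l2_restrict[OF l2_column])
  show "l2 (\<lambda>i. (d j * column j j) * column j i)" by (rule l2_cmult[OF l2_column])
  show "shift_diag w d (\<lambda>i. if j \<le> i then column j i else 0)
      = shift_diag w d (\<lambda>i. (d j * column j j) * column j i)"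
  proof
    fix i
    have "shift_diag w d (\<lambda>i. (d j * column j j) * column j i) i
        = (d j * column j j) * (w (i - 1) * column j (i - 1) + d i * column j i)"
      by (simp add: shift_diag_apply algebra_simps)
    also have "\<dots> = (if i = j then d j * column j j else 0)"
      by (simp add: column_equation)
    finally show "shift_diag w d (\<lambda>i. if j \<le> i then column j i else 0) i
        = shift_diag w d (\<lambda>i. (d j * column j j) * column j i) i"
      using column_equation[of i j] by (auto simp: shift_diag_apply)
  qed
qed

definition forward :: "int \<Rightarrow> bool" where
  "forward j \<longleftrightarrow> d j * column j j = 1"

lemma forward_column_vanishes: "forward j \<Longrightarrow> i < j \<Longrightarrow> column j i = 0"
  using fun_cong[OF column_restrict_right, of j i] by (simp add: forward_def)

lemma backward_column_vanishes: "\<not> forward j \<Longrightarrow> j \<le> i \<Longrightarrow> column j i = 0"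
proof -
  assume "\<not> forward j" "j \<le> i"
  then have "column j i = (d j * column j j) * column j i"
    using fun_cong[OF column_restrict_right, of j i] by simp
  then have "(1 - d j * column j j) * column j i = 0"
    by (simp add: algebra_simps)
  then show ?thesis
    using \<open>\<not> forward j\<close> by (simp add: forward_def)
qed

lemma forward_iff_forward_succ: "forward (j + 1) \<longleftrightarrow> forward j"
proof -
  have succ_step: "w j * column (j + 1) j + d (j + 1) * column (j + 1) (j + 1) = 1"
    using column_equation[of "j + 1" "j + 1"] by simp
  have at_j: "w j * column (j + 1) j + d j * column j j = 1"
    using unit_vec_eq_columns[of j j] by (simp add: unit_vec_def)
  show ?thesis
  proof
    assume "forward (j + 1)"
    then show "forward j"
      using at_j forward_column_vanishes[of "j + 1" j] by (simp add: forward_def)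
  next
    assume "forward j"
    then have "w j * column (j + 1) j = 0" using at_j by (simp add: forward_def)
    then show "forward (j + 1)"
      using succ_step backward_column_vanishes[of "j + 1" "j + 1"]
      by (auto simp: forward_def)
  qed
qed

lemma forward_all_or_none: "(\<forall>j. forward j) \<or> (\<forall>j. \<not> forward j)"
proof -
  have "forward j \<longleftrightarrow> forward 0" for j
    by (induction j rule: int_induct[where k=0])
       (use forward_iff_forward_succ[of "_ - 1"] forward_iff_forward_succ in auto)
  then show ?thesis by blast
qed

lemma forward_column_formula:
  assumes "\<forall>j. forward j"
  shows "column j (j + int k) * (\<Prod>m\<le>k. d (j + int m)) = (-1)^k * (\<Prod>m<k. w (j + int m))"
proof (induction k)
  case 0
  then show ?case using assms by (simp add: forward_def mult.commute)
next
  case (Suc k)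
  have recursion: "d (j + int (Suc k)) * column j (j + int (Suc k)) = - (w (j + int k) * column j (j + int k))"
    using column_equation[of "j + int (Suc k)" j] by (simp add: eq_neg_iff_add_eq_0 add.commute)
  have "column j (j + int (Suc k)) * (\<Prod>m\<le>Suc k. d (j + int m))
      = (d (j + int (Suc k)) * column j (j + int (Suc k))) * (\<Prod>m\<le>k. d (j + int m))"
    by (simp add: prod.atMost_Suc algebra_simps)
  also have "\<dots> = - w (j + int k) * (column j (j + int k) * (\<Prod>m\<le>k. d (j + int m)))"
    using recursion by simp
  also have "\<dots> = (-1)^(Suc k) * (\<Prod>m<Suc k. w (j + int m))"
    using Suc.IH by (simp add: prod.lessThan_Suc algebra_simps)
  finally show ?case .
qed

lemma backward_column_formula:
  assumes "\<forall>j. \<not> forward j"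
  shows "column j (j - int (Suc k)) * (\<Prod>m\<in>{1..Suc k}. w (j - int m))
       = (-1)^k * (\<Prod>m\<in>{1..<Suc k}. d (j - int m))"
proof (induction k)
  case 0
  have "column j j = 0" using assms backward_column_vanishes by blast
  then show ?case using column_equation[of j j] by (simp add: mult.commute)
next
  case (Suc k)
  have recursion: "w (j - int (Suc (Suc k))) * column j (j - int (Suc (Suc k)))
      = - (d (j - int (Suc k)) * column j (j - int (Suc k)))"
    using column_equation[of "j - int (Suc k)" j]
    by (simp add: eq_neg_iff_add_eq_0 algebra_simps)
  have "column j (j - int (Suc (Suc k))) * (\<Prod>m\<in>{1..Suc (Suc k)}. w (j - int m))
      = (w (j - int (Suc (Suc k))) * column j (j - int (Suc (Suc k))))
        * (\<Prod>m\<in>{1..Suc k}. w (j - int m))"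
    by (simp add: prod.cl_ivl_Suc algebra_simps)
  also have "\<dots> = - d (j - int (Suc k)) * (column j (j - int (Suc k)) * (\<Prod>m\<in>{1..Suc k}. w (j - int m)))"
    using recursion by simp
  also have "\<dots> = (-1)^(Suc k) * (\<Prod>m\<in>{1..<Suc (Suc k)}. d (j - int m))"
    using Suc.IH by (simp add: prod.atLeastLessThan_Suc algebra_simps)
  finally show ?case .
qed

lemma backward_weight_nonzero: "\<not> forward (i + 1) \<Longrightarrow> w i \<noteq> 0"
  using column_equation[of "i + 1" "i + 1"] backward_column_vanishes[of "i + 1" "i + 1"] by auto

end

lemma equot_le_if_cmod_mult_eq:
  assumes "cmod c * cmod den = cmod num" "den \<noteq> 0" "cmod c \<le> M"
  shows "equot num den \<le> ereal M"
proof -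
  have "cmod num / cmod den = cmod c" using assms(1,2) by (simp flip: assms(1))
  then show ?thesis using assms(2,3) by (simp add: equot_def)
qed

lemma eroot_SUP_le_root:
  fixes f :: "'a \<Rightarrow> ereal"
  assumes "\<And>i. 0 \<le> f i" "\<And>i. f i \<le> ereal M"
  shows "eroot k (SUP i. f i) \<le> ereal (root k M)"
proof -
  have "0 \<le> (SUP i. f i)" "(SUP i. f i) \<le> ereal M"
    using assms by (auto intro: SUP_upper2 SUP_least)
  then obtain s where s: "(SUP i. f i) = ereal s" "0 \<le> s" "s \<le> M"
    by (cases "SUP i. f i") auto
  have "root k s \<le> root k M"
    by (cases "k = 0") (use s in \<open>auto intro: real_root_le_mono\<close>)
  then show ?thesis using s by (simp add: eroot_def)
qed

lemma lim_le_one_if_le_root: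
  assumes "convergent f" "\<And>k. f k \<le> ereal (root k M)" "M > 0"
  shows "lim f \<le> (1::ereal)"
proof -
  have "f \<longlonglongrightarrow> lim f" using assms(1) by (simp add: convergent_LIMSEQ_iff)
  moreover have "(\<lambda>k. ereal (root k M)) \<longlonglongrightarrow> 1"
    using tendsto_ereal[OF LIMSEQ_root_const[OF assms(3)]] by (simp add: one_ereal_def)
  ultimately show ?thesis using assms(2) by (intro LIMSEQ_le[of f _ "\<lambda>k. ereal (root k M)"]) auto
qed

context shift_diag_inverse
begin

lemma lim_Rplus_seq_le_one:
  assumes "convergent (Rplus_seq w d)" "\<forall>j. forward j"
  shows "lim (Rplus_seq w d) \<le> 1"
proof (rule lim_le_one_if_le_root[OF assms(1)])
  show "0 < max C 1" by simp
  fix k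
  have d_nonzero: "d i \<noteq> 0" for i
    using assms(2) unfolding forward_def by (metis mult_zero_left zero_neq_one)
  have "equot (\<Prod>m<k. w (j + int m)) (\<Prod>m\<le>k. d (j + int m)) \<le> ereal (max C 1)" for j
    using arg_cong[OF forward_column_formula[OF assms(2), of j k], of cmod]
          cmod_column_le[of j "j + int k"] d_nonzero
    by (intro equot_le_if_cmod_mult_eq[where c="column j (j + int k)"]) (auto simp: norm_mult norm_power)
  then show "Rplus_seq w d k \<le> ereal (root k (max C 1))"
    unfolding Rplus_seq_def by (intro eroot_SUP_le_root) (auto simp: equot_def)
qed

lemma lim_Rminus_seq_le_one:
  assumes "convergent (Rminus_seq w d)" "\<forall>j. \<not> forward j"
  shows "lim (Rminus_seq w d) \<le> 1"
proof (rule lim_le_one_if_le_root[OF assms(1)])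
  show "0 < max C 1" by simp
  fix k
  have w_nonzero: "w i \<noteq> 0" for i
    using assms(2) backward_weight_nonzero by blast
  have "equot (\<Prod>m\<in>{1..<k}. d (j - int m)) (\<Prod>m\<in>{1..k}. w (j - int m)) \<le> ereal (max C 1)" for j
  proof (cases k)
    case 0
    then show ?thesis by (simp add: equot_def)
  next
    case (Suc k')
    then show ?thesis
      using arg_cong[OF backward_column_formula[OF assms(2), of j k'], of cmod]
            cmod_column_le[of j "j - int k"] w_nonzero
      by (intro equot_le_if_cmod_mult_eq[where c="column j (j - int k)"]) (auto simp: norm_mult norm_power)
  qed
  then show "Rminus_seq w d k \<le> ereal (root k (max C 1))"
    unfolding Rminus_seq_def by (intro eroot_SUP_le_root) (auto simp: equot_def)
qed

end

theorem mainTheorem1: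
  fixes w d :: "int \<Rightarrow> complex"
  assumes w_bdd: "\<exists>B. \<forall>i. cmod (w i) \<le> B"
    and d_bdd: "\<exists>B. \<forall>i. cmod (d i) \<le> B"
    and Rplus_ex: "convergent (Rplus_seq w d)"
    and Rminus_ex: "convergent (Rminus_seq w d)"
    and inv: "invertible_l2 (shift_diag w d)"
  shows "lim (Rplus_seq w d) \<le> 1 \<or> lim (Rminus_seq w d) \<le> 1"
proof -
  obtain U C where "shift_diag_inverse w d U C"
    using inv unfolding invertible_l2_def shift_diag_inverse_def by blast
  then interpret shift_diag_inverse w d U C .
  from forward_all_or_none show ?thesis
    using lim_Rplus_seq_le_one[OF Rplus_ex] lim_Rminus_seq_le_one[OF Rminus_ex] by blast
qed

end
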